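(* In every configuration reached during a fair execution of Algorithm DLE from a permitted initial configuration, the following hold: (1) for any expanded particle, its head is in $S_e$ and its tail is not in $S_e$; (2) $S_e$ is simply-connected and non-empty; (3) every boundary point of $S_e$ is occupied by a particle; (4) the $eligible$ variables of all particles are consistent, i.e., for every particle $p$ and every port $i\in\{0,\dots,5\}$, $p.eligible[i]=true$ if and only if the point reached via port $i$ of $p$'s head is in $S_e$.
   Context: Geometry. The triangular grid $G$ has as vertices ("points") the points of the regular triangular lattice in the plane, adjacent iff at unit distance; each point has six incident edges, cyclically ordered clockwise. A shape is a finite set of points (identified with its induced subgraph). For a connected shape $S$: the unbounded face is the outer face; a bounded face containing a grid point not in $S$ is a hole, whose grid points are hole points; the area of $S$ is $S$ together with its hole points; $S$ is simply-connected if it is connected with no holes; the outer boundary is the set of points of $S$ on the boundary of the outer face; a boundary point is a point of $S$ adjacent to a point not in $S$. For a boundary point $v$, a local boundary $B$ of $v$ w.r.t. $S$ is a maximal clockwise cyclic interval of consecutive edges at $v$ leading to points not in $S$, with boundary count $c(v,B)=|B|-2$. $v$ is redundant if its neighbors in $S$ induce a connected subgraph; erodable if redundant and on the outer boundary (then it has a single local boundary $B$); SCE if erodable and $c(v,B)>0$. Model (amoebot, strong scheduler). Anonymous constant-memory particles each occupy one point (contracted) or two adjacent points (expanded; head and tail); no point is occupied twice. Each particle labels the edges at its point by ports $0,\dots,5$; all share clockwise chirality, and a particle knows the port a neighbor uses for their common edge. Particles read and write neighbors' memories. A contracted particle may expand into an adjacent unoccupied point (its new head); an expanded one may contract into either of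 its points; handovers allowed. An execution is a sequence of atomic activations of single particles; in an activation a particle reads neighbors' memories, computes, writes memories, and performs at most one movement. A fair execution activates every particle infinitely often. A permitted initial configuration $C_0$: all particles contracted, at least one particle, set $S_P(C_0)$ of occupied points connected. Input: each particle knows, for each port $i$, whether the point via port $i$ lies in the outer face of $S_P(C_0)$. Algorithm DLE. It maintains a set $S_e$ of eligible points, initially the area of $S_P(C_0)$; points are only removed. Each particle $p$ has $status\in\{undecided,leader,follower\}$ (initially $undecided$) and $eligible[0..5]$ (initially $eligible[i]$ true iff the point via port $i$ is not in the outer face of $S_P(C_0)$). On activation: (a) if $p$ is expanded, it contracts into its head; (b) else if $p$ and all its neighbors have status $\ne undecided$, $p$ terminates; (c) else if $p.status=undecided$ ($p$ contracted at $v$): if by its $eligible$ array no neighbor of $v$ is in $S_e$, it sets $status:=leader$; else if $v$ is SCE w.r.t. $S_e$, then $v$ is removed from $S_e$ and each neighboring particle whose head is adjacent to $v$ sets its $eligible$ entry for $v$ to false; then, if $v$ has an adjacent point $u\in S_e$ not occupied by any particle, $p$ sets its $eligible$ entries to true except the one for the port from $u$ back to $v$ (set false) and expands into $u$; otherwise $p$ sets $status:=follower$. Otherwise $p$ does nothing. *)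

theory Defs
  imports "HOL-Analysis.Analysis"
begin

text \<open>Grid points in axial coordinates; the point (a,b) is drawn in the plane at
  a + b * omega, with omega = cis(pi/3).\<close>
type_synonym point = "int \<times> int"

definition pt_add :: "point \<Rightarrow> point \<Rightarrow> point" where
  "pt_add u d = (fst u + fst d, snd u + snd d)"

text \<open>The six unit directions, listed in clockwise order (index taken mod 6).\<close>
definition gdir :: "nat \<Rightarrow> point" where
  "gdir i = (case i mod 6 of
      0 \<Rightarrow> (1, 0) | Suc 0 \<Rightarrow> (1, -1) | Suc (Suc 0) \<Rightarrow> (0, -1)
    | Suc (Suc (Suc 0)) \<Rightarrow> (-1, 0) | Suc (Suc (Suc (Suc 0))) \<Rightarrow> (-1, 1) | _ \<Rightarrow> (0, 1))"

definition adj :: "point \<Rightarrow> point \<Rightarrow> bool" where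
  "adj u v \<longleftrightarrow> (\<exists>i<6. v = pt_add u (gdir i))"

definition emb :: "point \<Rightarrow> complex" where
  "emb p = of_int (fst p) + of_int (snd p) * cis (pi / 3)"

definition shape_connected :: "point set \<Rightarrow> bool" where
  "shape_connected S \<longleftrightarrow>
     (\<forall>u\<in>S. \<forall>v\<in>S. (u, v) \<in> {(x, y). x \<in> S \<and> y \<in> S \<and> adj x y}\<^sup>*)"

definition drawing :: "point set \<Rightarrow> complex set" where
  "drawing S = emb ` S \<union>
     \<Union> {closed_segment (emb u) (emb v) | u v. u \<in> S \<and> v \<in> S \<and> adj u v}"

definition outer_region :: "point set \<Rightarrow> complex set" where
  "outer_region S = {z. z \<notin> drawing S \<and>
      \<not> bounded (connected_component_set (- drawing S) z)}"

definition outer_face_point :: "point set \<Rightarrow> point \<Rightarrow> bool" where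
  "outer_face_point S q \<longleftrightarrow> q \<notin> S \<and> emb q \<in> outer_region S"

definition hole_point :: "point set \<Rightarrow> point \<Rightarrow> bool" where
  "hole_point S q \<longleftrightarrow> q \<notin> S \<and> emb q \<notin> drawing S \<and>
      bounded (connected_component_set (- drawing S) (emb q))"

definition shape_area :: "point set \<Rightarrow> point set" where
  "shape_area S = S \<union> {q. hole_point S q}"

definition simply_connected_shape :: "point set \<Rightarrow> bool" where
  "simply_connected_shape S \<longleftrightarrow> shape_connected S \<and> (\<forall>q. \<not> hole_point S q)"

definition on_outer_boundary :: "point set \<Rightarrow> point \<Rightarrow> bool" where
  "on_outer_boundary S v \<longleftrightarrow> v \<in> S \<and> emb v \<in> frontier (outer_region S)"

definition boundary_point :: "point set \<Rightarrow> point \<Rightarrow> bool" where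
  "boundary_point S v \<longleftrightarrow> v \<in> S \<and> (\<exists>u. adj v u \<and> u \<notin> S)"

definition cyc_interval :: "nat \<Rightarrow> nat \<Rightarrow> nat set" where
  "cyc_interval s l = {(s + k) mod 6 | k. k < l}"

text \<open>B is a local boundary of v w.r.t. S: a maximal clockwise cyclic interval of
  consecutive edges at v leading to points not in S (edges identified by direction index).\<close>
definition local_boundary :: "point set \<Rightarrow> point \<Rightarrow> nat set \<Rightarrow> bool" where
  "local_boundary S v B \<longleftrightarrow> v \<in> S \<and>
     (\<exists>s<6. \<exists>l. 1 \<le> l \<and> l \<le> 6 \<and> B = cyc_interval s l \<and>
        (\<forall>i\<in>B. pt_add v (gdir i) \<notin> S) \<and>
        (l < 6 \<longrightarrow> pt_add v (gdir ((s + 5) mod 6)) \<in> S \<and> pt_add v (gdir ((s + l) mod 6)) \<in> S))"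

definition boundary_count :: "nat set \<Rightarrow> int" where
  "boundary_count B = int (card B) - 2"

definition redundant :: "point set \<Rightarrow> point \<Rightarrow> bool" where
  "redundant S v \<longleftrightarrow> v \<in> S \<and> shape_connected {u \<in> S. adj v u}"

definition erodable :: "point set \<Rightarrow> point \<Rightarrow> bool" where
  "erodable S v \<longleftrightarrow> redundant S v \<and> on_outer_boundary S v"

definition SCE :: "point set \<Rightarrow> point \<Rightarrow> bool" where
  "SCE S v \<longleftrightarrow> erodable S v \<and> (\<exists>B. local_boundary S v B \<and> boundary_count B > 0)"

datatype status = Undecided | Leader | Follower

text \<open>Particles are identified by elements of a type 'p (identities are only for the analysis;
  particles are anonymous).  A particle is contracted iff head = tail.  Se is the (ghost)
  set of eligible points maintained by the algorithm.  pelig p i refers to port i of p's head.\<close>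
record 'p config =
  phead   :: "'p \<Rightarrow> point"
  ptail   :: "'p \<Rightarrow> point"
  pstatus :: "'p \<Rightarrow> status"
  pelig   :: "'p \<Rightarrow> nat \<Rightarrow> bool"
  pterm   :: "'p \<Rightarrow> bool"
  Se      :: "point set"

text \<open>Each particle p has a fixed port labelling; with common clockwise chirality this is a
  rotation: port i of p is the global direction (i + off p) mod 6.\<close>
definition port_pt :: "('p \<Rightarrow> nat) \<Rightarrow> ('p, 'z) config_scheme \<Rightarrow> 'p \<Rightarrow> nat \<Rightarrow> point" where
  "port_pt off C p i = pt_add (phead C p) (gdir (i + off p))"

definition occupied :: "'p set \<Rightarrow> ('p, 'z) config_scheme \<Rightarrow> point set" where
  "occupied P C = phead C ` P \<union> ptail C ` P"

definition nbr_particles :: "'p set \<Rightarrow> ('p, 'z) config_scheme \<Rightarrow> 'p \<Rightarrow> 'p set" where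
  "nbr_particles P C p = {q \<in> P. q \<noteq> p \<and>
     (\<exists>x\<in>{phead C q, ptail C q}. \<exists>y\<in>{phead C p, ptail C p}. adj y x)}"

definition permitted_init :: "('p \<Rightarrow> nat) \<Rightarrow> 'p set \<Rightarrow> 'p config \<Rightarrow> bool" where
  "permitted_init off P C \<longleftrightarrow>
     finite P \<and> P \<noteq> {} \<and>
     (\<forall>p\<in>P. ptail C p = phead C p) \<and>
     inj_on (phead C) P \<and>
     shape_connected (phead C ` P) \<and>
     (\<forall>p\<in>P. pstatus C p = Undecided \<and> \<not> pterm C p \<and>
        (\<forall>i<6. pelig C p i \<longleftrightarrow> \<not> outer_face_point (phead C ` P) (port_pt off C p i))) \<and>
     Se C = shape_area (phead C ` P)"

text \<open>One atomic activation of particle p under Algorithm DLE (relation, since the choice of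
  the point u to expand into is nondeterministic).\<close>
definition dle_act :: "('p \<Rightarrow> nat) \<Rightarrow> 'p set \<Rightarrow> 'p \<Rightarrow> 'p config \<Rightarrow> 'p config \<Rightarrow> bool" where
  "dle_act off P p C C' \<longleftrightarrow>
    (let v = phead C p in
     if pterm C p then C' = C
     else if phead C p \<noteq> ptail C p then
       C' = C\<lparr>ptail := (ptail C)(p := phead C p)\<rparr>
     else if pstatus C p \<noteq> Undecided \<and> (\<forall>q\<in>nbr_particles P C p. pstatus C q \<noteq> Undecided) then
       C' = C\<lparr>pterm := (pterm C)(p := True)\<rparr>
     else if pstatus C p = Undecided then
       (if (\<forall>i<6. \<not> pelig C p i) then
          C' = C\<lparr>pstatus := (pstatus C)(p := Leader)\<rparr>
        else if SCE (Se C) v then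
          (let Se' = Se C - {v};
               el1 = (\<lambda>q i. if q \<in> nbr_particles P C p \<and> adj (phead C q) v \<and> port_pt off C q i = v
                             then False else pelig C q i);
               free = {u. adj v u \<and> u \<in> Se' \<and> u \<notin> occupied P C}
           in (\<exists>u\<in>free. C' = C\<lparr>Se := Se',
                                 pelig := el1(p := (\<lambda>i. pt_add u (gdir (i + off p)) \<noteq> v)),
                                 phead := (phead C)(p := u)\<rparr>)
              \<or> (free = {} \<and> C' = C\<lparr>Se := Se', pelig := el1,
                                     pstatus := (pstatus C)(p := Follower)\<rparr>))
        else C' = C)
     else C' = C)"

definition fair_dle_execution ::
  "('p \<Rightarrow> nat) \<Rightarrow> 'p set \<Rightarrow> (nat \<Rightarrow> 'p config) \<Rightarrow> (nat \<Rightarrow> 'p) \<Rightarrow> bool" where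
  "fair_dle_execution off P E sched \<longleftrightarrow>
     permitted_init off P (E 0) \<and>
     (\<forall>n. sched n \<in> P \<and> dle_act off P (sched n) (E n) (E (Suc n))) \<and>
     (\<forall>p\<in>P. \<forall>n. \<exists>m\<ge>n. sched m = p)"

end

theory Submission
  imports Defs
begin

text \<open>The four claims, together with finiteness of \<open>Se\<close> and the exclusion property of the model,
  form an invariant of every activation.  Initially \<open>Se\<close> is the area of a connected shape: filling
  in the holes keeps it connected and creates no new hole, and the area has no boundary points outside
  the shape, because a hole point next to a non-shape point makes that point a hole point as well.
  An erosion step removes an SCE point \<open>v\<close>.  As \<open>v\<close> is redundant, \<open>Se - {v}\<close> stays connected;
  as \<open>v\<close> lies on the outer boundary, the disc around \<open>v\<close> joins the outer face and no hole appears.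
  The only new boundary points are the neighbours of \<open>v\<close> in \<open>Se\<close>; an unoccupied one has all its
  neighbours in \<open>Se\<close>, and a point with a local boundary of at least three edges has at most one such
  neighbour, which is exactly the point the particle expands into.  The topological facts rest on the
  observation that two edges of the grid meet only in common endpoints.\<close>

section \<open>Directions and adjacency\<close>

lemma gdir_mod6: "gdir (i mod 6) = gdir i"
  by (simp add: gdir_def)

lemma mod6_cases:
  fixes i :: nat
  obtains "i mod 6 = 0" | "i mod 6 = 1" | "i mod 6 = 2" | "i mod 6 = 3" | "i mod 6 = 4" | "i mod 6 = 5"
  by arith

lemma gdir_add_mod6: "gdir (j + k) = gdir (j mod 6 + k)"
  by (metis gdir_mod6 mod_add_left_eq)

lemma gdir_eq:
  "gdir i = (if i mod 6 = 0 then (1, 0) else if i mod 6 = 1 then (1, -1)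
     else if i mod 6 = 2 then (0, -1) else if i mod 6 = 3 then (-1, 0)
     else if i mod 6 = 4 then (-1, 1) else (0, 1))"
  unfolding gdir_def by (auto split: nat.split)

definition unit_steps :: "point set" where
  "unit_steps = {(1, 0), (1, -1), (0, -1), (-1, 0), (-1, 1), (0, 1)}"

lemma unit_steps_eq: "unit_steps = gdir ` {..<6}"
proof -
  have "{..<6::nat} = {0, 1, 2, 3, 4, 5}" by auto
  then show ?thesis
    by (auto simp: unit_steps_def gdir_eq)
qed

lemma gdir_in_unit_steps: "gdir i \<in> unit_steps"
  by (metis unit_steps_eq gdir_mod6 image_eqI lessThan_iff mod_less_divisor zero_less_numeral)

lemma unit_steps_bounded: "(a, b) \<in> unit_steps \<Longrightarrow> \<bar>a\<bar> \<le> 1 \<and> \<bar>b\<bar> \<le> 1"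
  by (auto simp: unit_steps_def)

lemma unit_steps_iff:
  "(a, b) \<in> unit_steps \<longleftrightarrow> (a = 1 \<and> b = 0) \<or> (a = 1 \<and> b = -1) \<or> (a = 0 \<and> b = -1)
     \<or> (a = -1 \<and> b = 0) \<or> (a = -1 \<and> b = 1) \<or> (a = 0 \<and> b = 1)"
  by (simp add: unit_steps_def)

lemma adj_iff_unit_step: "adj u v \<longleftrightarrow> (fst v - fst u, snd v - snd u) \<in> unit_steps"
proof -
  have "v = pt_add u d \<longleftrightarrow> (fst v - fst u, snd v - snd u) = d" for d
    by (auto simp: pt_add_def)
  then show ?thesis
    unfolding adj_def unit_steps_eq by blast
qed

lemma adj_sym: "adj u v \<Longrightarrow> adj v u"
  unfolding adj_iff_unit_step unit_steps_iff by (elim disjE conjE) simp_all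

lemma adj_irrefl: "\<not> adj u u"
  by (simp add: adj_iff_unit_step unit_steps_def)

lemma adj_pt_add_gdir: "adj u (pt_add u (gdir i))"
  using gdir_in_unit_steps[of i] by (simp add: adj_iff_unit_step pt_add_def)

lemma pt_add_gdir_neq: "pt_add v (gdir i) \<noteq> v"
  using adj_pt_add_gdir adj_irrefl by metis

lemma adjE:
  assumes "adj u v"
  obtains i where "i < 6" "v = pt_add u (gdir i)"
  using assms unfolding adj_def by blast

lemma gdir_step_next: "pt_add (pt_add v (gdir j)) (gdir (j + 2)) = pt_add v (gdir (j + 1))"
  unfolding gdir_add_mod6[of j] by (cases j rule: mod6_cases) (simp_all add: gdir_eq pt_add_def)

lemma gdir_step_prev: "pt_add (pt_add v (gdir j)) (gdir (j + 4)) = pt_add v (gdir (j + 5))"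
  unfolding gdir_add_mod6[of j] by (cases j rule: mod6_cases) (simp_all add: gdir_eq pt_add_def)

section \<open>The drawing of a shape\<close>

definition axial_fst :: "complex \<Rightarrow> real" where
  "axial_fst z = Re z - Im z / sqrt 3"

definition axial_snd :: "complex \<Rightarrow> real" where
  "axial_snd z = 2 * Im z / sqrt 3"

lemma axial_fst_emb: "axial_fst (emb p) = of_int (fst p)"
  and axial_snd_emb: "axial_snd (emb p) = of_int (snd p)"
  by (simp_all add: axial_fst_def axial_snd_def emb_def cos_60 sin_60)

lemma axial_fst_convex: "axial_fst ((1 - t) *\<^sub>R x + t *\<^sub>R y) = (1 - t) * axial_fst x + t * axial_fst y"
  and axial_snd_convex: "axial_snd ((1 - t) *\<^sub>R x + t *\<^sub>R y) = (1 - t) * axial_snd x + t * axial_snd y"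
  by (simp_all add: axial_fst_def axial_snd_def algebra_simps diff_divide_distrib add_divide_distrib)

lemma inj_emb: "inj emb"
proof (rule injI)
  fix p q assume "emb p = emb q"
  then have "axial_fst (emb p) = axial_fst (emb q)" "axial_snd (emb p) = axial_snd (emb q)"
    by simp_all
  then show "p = q" by (simp add: axial_fst_emb axial_snd_emb prod_eq_iff)
qed

lemma Ints_unit_interval: "(t::real) \<in> \<int> \<Longrightarrow> 0 \<le> t \<Longrightarrow> t \<le> 1 \<Longrightarrow> t = 0 \<or> t = 1"
  by (elim Ints_cases) (auto simp: le_less)

lemma lattice_point_on_edge:
  assumes "adj a b" "0 \<le> t" "t \<le> 1" "(1 - t) *\<^sub>R emb a + t *\<^sub>R emb b = emb c"
  shows "(t = 0 \<and> c = a) \<or> (t = 1 \<and> c = b)"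
proof -
  have c1: "of_int (fst c) = of_int (fst a) + t * of_int (fst b - fst a)"
    using arg_cong[OF assms(4), of axial_fst] unfolding axial_fst_convex axial_fst_emb
    by (simp add: algebra_simps)
  have c2: "of_int (snd c) = of_int (snd a) + t * of_int (snd b - snd a)"
    using arg_cong[OF assms(4), of axial_snd] unfolding axial_snd_convex axial_snd_emb
    by (simp add: algebra_simps)
  have "fst b - fst a \<in> {-1, 1} \<or> snd b - snd a \<in> {-1, 1}"
    using assms(1) unfolding adj_iff_unit_step unit_steps_iff by auto
  moreover have "t * of_int (fst b - fst a) \<in> \<int>" "t * of_int (snd b - snd a) \<in> \<int>"
    using c1 c2 by (metis Ints_diff Ints_of_int add_diff_cancel_left')+
  moreover have "t \<in> \<int>" if "t * of_int d \<in> \<int>" "d \<in> {-1, 1}" for d :: int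
    using that by (auto dest: Ints_minus)
  ultimately have "t \<in> \<int>" by blast
  then have "t = 0 \<or> t = 1" using Ints_unit_interval assms(2,3) by blast
  then show ?thesis using c1 c2 by (auto simp: prod_eq_iff)
qed

text \<open>In axial coordinates: if the open unit edge from the origin in direction \<open>e\<close> meets the
  open unit edge from \<open>d\<close> in direction \<open>f\<close>, then the two edges coincide.\<close>
lemma unit_steps_crossing:
  fixes t s :: real
  assumes e: "(e1, e2) \<in> unit_steps" and f: "(f1, f2) \<in> unit_steps"
    and ts: "0 < t" "t < 1" "0 < s" "s < 1"
    and d: "of_int d1 = t * of_int e1 - s * of_int f1" "of_int d2 = t * of_int e2 - s * of_int f2"
  shows "(d1 = 0 \<and> d2 = 0 \<and> f1 = e1 \<and> f2 = e2) \<or> (d1 = e1 \<and> d2 = e2 \<and> f1 = - e1 \<and> f2 = - e2)"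
proof -
  have small: "d \<in> {-1, 0, 1}"
    if "of_int d = t * of_int x - s * of_int y" "\<bar>x\<bar> \<le> 1" "\<bar>y\<bar> \<le> 1" for d x y :: int
  proof -
    have "\<bar>t * of_int x\<bar> \<le> t" "\<bar>s * of_int y\<bar> \<le> s"
      using that(2,3) ts by (auto simp: abs_mult intro: mult_left_le)
    then have "\<bar>of_int d :: real\<bar> < 2" using that(1) ts by linarith
    then show ?thesis by auto
  qed
  have "d1 \<in> {-1, 0, 1}" "d2 \<in> {-1, 0, 1}"
    using small d unit_steps_bounded[OF e] unit_steps_bounded[OF f] by blast+
  then show ?thesis using e f ts d unfolding unit_steps_iff
    by (elim disjE conjE insertE emptyE) (clarify; ((simp; fail) | linarith))+
qed

lemma edge_interiors_meet:
  assumes ab: "adj a b" and cd: "adj c d" and t: "0 \<le> t" "t \<le> 1" and s: "0 < s" "s < 1"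
    and eq: "(1 - t) *\<^sub>R emb a + t *\<^sub>R emb b = (1 - s) *\<^sub>R emb c + s *\<^sub>R emb d"
  shows "(c = a \<and> d = b) \<or> (c = b \<and> d = a)"
proof -
  have off_lattice: "(1 - s) *\<^sub>R emb c + s *\<^sub>R emb d \<noteq> emb x" for x
    using lattice_point_on_edge[OF cd, of s x] s by auto
  have "t \<noteq> 0" using off_lattice[of a] eq by auto
  moreover have "t \<noteq> 1" using off_lattice[of b] eq by auto
  ultimately have t': "0 < t" "t < 1" using t by auto
  have d1: "of_int (fst c - fst a) = t * of_int (fst b - fst a) - s * of_int (fst d - fst c)"
    using arg_cong[OF eq, of axial_fst] unfolding axial_fst_convex axial_fst_emb
    by (simp add: algebra_simps)
  have d2: "of_int (snd c - snd a) = t * of_int (snd b - snd a) - s * of_int (snd d - snd c)"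
    using arg_cong[OF eq, of axial_snd] unfolding axial_snd_convex axial_snd_emb
    by (simp add: algebra_simps)
  have "(fst b - fst a, snd b - snd a) \<in> unit_steps" "(fst d - fst c, snd d - snd c) \<in> unit_steps"
    using ab cd by (simp_all add: adj_iff_unit_step)
  from unit_steps_crossing[OF this t' s d1 d2] show ?thesis by (auto simp: prod_eq_iff)
qed

lemma in_drawing_iff:
  "z \<in> drawing S \<longleftrightarrow> (\<exists>c\<in>S. z = emb c) \<or>
     (\<exists>c d s. c \<in> S \<and> d \<in> S \<and> adj c d \<and> 0 \<le> s \<and> s \<le> 1 \<and> z = (1 - s) *\<^sub>R emb c + s *\<^sub>R emb d)"
proof -
  have "z \<in> \<Union> {closed_segment (emb u) (emb v) |u v. u \<in> S \<and> v \<in> S \<and> adj u v} \<longleftrightarrow>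
     (\<exists>u v. u \<in> S \<and> v \<in> S \<and> adj u v \<and> z \<in> closed_segment (emb u) (emb v))"
    by blast
  then show ?thesis unfolding drawing_def in_segment(1) by blast
qed

lemma drawing_mono: "S \<subseteq> T \<Longrightarrow> drawing S \<subseteq> drawing T"
  unfolding drawing_def by blast

lemma closed_drawing: "finite S \<Longrightarrow> closed (drawing S)"
proof -
  assume S: "finite S"
  have "{closed_segment (emb u) (emb v) |u v. u \<in> S \<and> v \<in> S \<and> adj u v}
     \<subseteq> (\<lambda>(u, v). closed_segment (emb u) (emb v)) ` (S \<times> S)"
    by auto
  then have "finite {closed_segment (emb u) (emb v) |u v. u \<in> S \<and> v \<in> S \<and> adj u v}"
    by (rule finite_subset) (simp add: S)
  then show ?thesis
    unfolding drawing_def using S by (intro closed_Un closed_Union finite_imp_closed) auto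
qed

lemma edge_meets_drawing:
  assumes ab: "adj a b" and a: "a \<notin> S" and t: "0 \<le> t" "t \<le> 1"
    and z: "(1 - t) *\<^sub>R emb a + t *\<^sub>R emb b \<in> drawing S"
  shows "t = 1 \<and> b \<in> S"
proof -
  let ?z = "(1 - t) *\<^sub>R emb a + t *\<^sub>R emb b"
  have vertex: "?thesis" if "c \<in> S" "?z = emb c" for c
    using lattice_point_on_edge[OF ab t that(2)] that(1) a by blast
  from z consider c where "c \<in> S" "?z = emb c"
    | c d s where "c \<in> S" "d \<in> S" "adj c d" "0 \<le> s" "s \<le> 1" "?z = (1 - s) *\<^sub>R emb c + s *\<^sub>R emb d"
    unfolding in_drawing_iff by blast
  then show ?thesis
  proof cases
    case (2 c d s)
    show ?thesis
    proof (cases "s = 0 \<or> s = 1")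
      case True
      then have "?z = emb c \<or> ?z = emb d" using 2(6) by auto
      then show ?thesis using 2(1,2) vertex by blast
    next
      case False
      then have "0 < s" "s < 1" using 2 by auto
      then have "c = a \<or> d = a" using edge_interiors_meet[OF ab 2(3) t] 2(6) by blast
      then show ?thesis using 2 a by blast
    qed
  qed (use vertex in blast)
qed

lemma emb_in_drawing_iff: "emb q \<in> drawing S \<longleftrightarrow> q \<in> S"
proof
  assume q: "emb q \<in> drawing S"
  obtain d where "adj q d" using adj_pt_add_gdir by blast
  then show "q \<in> S"
    using edge_meets_drawing[of q d S 0] q by (cases "q \<in> S") auto
qed (simp add: drawing_def)

abbreviation complement_component :: "point set \<Rightarrow> complex \<Rightarrow> complex set" where
  "complement_component S z \<equiv> connected_component_set (- drawing S) z"

lemma edge_point_in_component: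
  assumes ab: "adj a b" and a: "a \<notin> S"
    and z: "z \<in> closed_segment (emb a) (emb b)" "z \<notin> drawing S"
  shows "z \<in> complement_component S (emb a)"
proof -
  obtain t where t: "0 \<le> t" "t \<le> 1" "z = (1 - t) *\<^sub>R emb a + t *\<^sub>R emb b"
    using z(1) unfolding in_segment(1) by blast
  have "closed_segment (emb a) z \<subseteq> - drawing S"
  proof
    fix w assume "w \<in> closed_segment (emb a) z"
    then obtain r where r: "0 \<le> r" "r \<le> 1" "w = (1 - r) *\<^sub>R emb a + r *\<^sub>R z"
      unfolding in_segment(1) by blast
    have w: "w = (1 - r * t) *\<^sub>R emb a + (r * t) *\<^sub>R emb b"
      unfolding r(3) t(3) by (simp add: algebra_simps)
    have rt: "0 \<le> r * t" "r * t \<le> 1" using r t by (auto intro: mult_le_one)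
    show "w \<in> - drawing S"
    proof
      assume "w \<in> drawing S"
      then have "r * t = 1" "b \<in> S" using edge_meets_drawing[OF ab a rt] w by simp_all
      moreover have "r * t \<le> t" using r t by (simp add: mult_left_le_one_le)
      ultimately have "z = emb b" using t by simp
      then show False using z(2) \<open>b \<in> S\<close> emb_in_drawing_iff by blast
    qed
  qed
  then have "closed_segment (emb a) z \<subseteq> complement_component S (emb a)"
    by (intro connected_component_maximal) auto
  then show ?thesis by auto
qed

lemma adjacent_in_component:
  assumes "adj a b" "a \<notin> S" "b \<notin> S"
  shows "emb b \<in> complement_component S (emb a)"
  using edge_point_in_component[OF assms(1,2)] emb_in_drawing_iff assms(3) by blast

section \<open>Holes and the area of a shape\<close>

definition grid_edges :: "point set \<Rightarrow> (point \<times> point) set" where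
  "grid_edges S = {(x, y). x \<in> S \<and> y \<in> S \<and> adj x y}"

lemma shape_connected_iff_grid_edges:
  "shape_connected S \<longleftrightarrow> (\<forall>u\<in>S. \<forall>v\<in>S. (u, v) \<in> (grid_edges S)\<^sup>*)"
  unfolding shape_connected_def grid_edges_def ..

lemma grid_edges_rtrancl_mono: "S \<subseteq> T \<Longrightarrow> (grid_edges S)\<^sup>* \<subseteq> (grid_edges T)\<^sup>*"
  unfolding grid_edges_def by (intro rtrancl_mono) blast

lemma grid_edges_rtrancl_sym: "(a, b) \<in> (grid_edges S)\<^sup>* \<Longrightarrow> (b, a) \<in> (grid_edges S)\<^sup>*"
proof -
  have "sym (grid_edges S)"
    unfolding grid_edges_def by (rule symI) (auto intro: adj_sym)
  then show "(a, b) \<in> (grid_edges S)\<^sup>* \<Longrightarrow> (b, a) \<in> (grid_edges S)\<^sup>*"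
    by (metis sym_rtrancl symD)
qed

lemma hole_point_adj:
  assumes "hole_point S h" "adj h x" "x \<notin> S"
  shows "hole_point S x"
proof -
  have "emb x \<in> complement_component S (emb h)"
    using adjacent_in_component[OF assms(2) _ assms(3)] assms(1) by (simp add: hole_point_def)
  then have "complement_component S (emb x) = complement_component S (emb h)"
    by (rule connected_component_eq)
  then show ?thesis
    using assms(1,3) emb_in_drawing_iff unfolding hole_point_def by auto
qed

definition ray :: "point \<Rightarrow> point \<Rightarrow> nat \<Rightarrow> point" where
  "ray h d k = (fst h + int k * fst d, snd h + int k * snd d)"

lemma ray_0 [simp]: "ray h d 0 = h"
  by (simp add: ray_def)

lemma ray_Suc: "ray h d (Suc k) = pt_add (ray h d k) d"
  and ray_Suc': "ray h d (Suc k) = ray (pt_add h d) d k"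
  by (simp_all add: ray_def pt_add_def algebra_simps)

lemma emb_ray: "emb (ray h d k) = emb h + of_nat k * emb d"
  by (simp add: ray_def emb_def algebra_simps)

text \<open>A ray avoiding \<open>S\<close> would stay in the bounded component of the hole.\<close>
lemma hole_point_ray_meets:
  assumes h: "hole_point S h"
  obtains k where "ray h (gdir i) k \<in> S"
proof (rule ccontr)
  assume "\<not> thesis"
  then have notS: "ray h (gdir i) k \<notin> S" for k using that by blast
  have in_comp: "emb (ray h (gdir i) k) \<in> complement_component S (emb h)" for k
  proof (induction k)
    case 0
    then show ?case using h by (simp add: hole_point_def)
  next
    case (Suc k)
    have "emb (ray h (gdir i) (Suc k)) \<in> complement_component S (emb (ray h (gdir i) k))"
      unfolding ray_Suc using adjacent_in_component[OF adj_pt_add_gdir notS] notS[of "Suc k"]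
      by (simp add: ray_Suc)
    then show ?case using Suc connected_component_eq by blast
  qed
  obtain B where B: "\<And>z. z \<in> complement_component S (emb h) \<Longrightarrow> norm z \<le> B"
    using h unfolding hole_point_def bounded_iff by blast
  have "gdir i \<noteq> (0, 0)"
    using gdir_in_unit_steps[of i] by (auto simp: unit_steps_def)
  then have c: "norm (emb (gdir i)) > 0"
    using injD[OF inj_emb, of "gdir i" "(0, 0)"] by (auto simp: emb_def)
  obtain k :: nat where "(B + norm (emb h) + 1) / norm (emb (gdir i)) < of_nat k"
    using reals_Archimedean2 by blast
  then have "B + norm (emb h) + 1 < of_nat k * norm (emb (gdir i))"
    using c by (simp add: field_simps)
  also have "\<dots> = norm (of_nat k * emb (gdir i))"
    by (simp add: norm_mult)
  also have "\<dots> \<le> norm (emb (ray h (gdir i) k)) + norm (emb h)"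
    unfolding emb_ray by (metis add_diff_cancel_left' norm_triangle_ineq4 add.commute)
  finally show False using B[OF in_comp[of k]] by linarith
qed

lemma hole_point_reaches_shape:
  assumes "hole_point S h"
  shows "\<exists>s\<in>S. (h, s) \<in> (grid_edges (shape_area S))\<^sup>*"
proof -
  obtain k where "ray h (gdir 0) k \<in> S" using hole_point_ray_meets[OF assms] .
  then show ?thesis using assms
  proof (induction k arbitrary: h)
    case 0
    then show ?case by (simp add: hole_point_def)
  next
    case (Suc k)
    let ?h' = "pt_add h (gdir 0)"
    have "h \<in> shape_area S" "?h' \<in> S \<or> hole_point S ?h'"
      using Suc.prems(2) hole_point_adj[OF Suc.prems(2) adj_pt_add_gdir] by (auto simp: shape_area_def)
    then have step: "(h, ?h') \<in> grid_edges (shape_area S)"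
      using adj_pt_add_gdir by (auto simp: grid_edges_def shape_area_def)
    show ?case
    proof (cases "?h' \<in> S")
      case True
      then show ?thesis using step by blast
    next
      case False
      then obtain s where "s \<in> S" "(?h', s) \<in> (grid_edges (shape_area S))\<^sup>*"
        using Suc.IH[of ?h'] Suc.prems(1) \<open>?h' \<in> S \<or> hole_point S ?h'\<close> by (auto simp: ray_Suc')
      then show ?thesis using step by (meson converse_rtrancl_into_rtrancl)
    qed
  qed
qed

lemma shape_connected_area:
  assumes "shape_connected S"
  shows "shape_connected (shape_area S)"
  unfolding shape_connected_iff_grid_edges
proof (intro ballI)
  have to_S: "\<exists>s\<in>S. (x, s) \<in> (grid_edges (shape_area S))\<^sup>*" if "x \<in> shape_area S" for x
    using that hole_point_reaches_shape[of S x] unfolding shape_area_def by blast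
  fix u v assume "u \<in> shape_area S" "v \<in> shape_area S"
  then obtain s t where "s \<in> S" "t \<in> S" and
    u: "(u, s) \<in> (grid_edges (shape_area S))\<^sup>*" and v: "(v, t) \<in> (grid_edges (shape_area S))\<^sup>*"
    using to_S by blast
  then have "(s, t) \<in> (grid_edges (shape_area S))\<^sup>*"
    using assms grid_edges_rtrancl_mono[of S "shape_area S"]
    unfolding shape_connected_iff_grid_edges shape_area_def by blast
  then show "(u, v) \<in> (grid_edges (shape_area S))\<^sup>*"
    using u v grid_edges_rtrancl_sym by (meson rtrancl_trans)
qed

lemma finite_shape_area:
  assumes "finite S"
  shows "finite (shape_area S)"
proof -
  let ?F = "fst ` S"
  have "x \<in> {Min ?F..Max ?F} \<times> snd ` S" if "x \<in> shape_area S" for x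
  proof (cases "x \<in> S")
    case True
    then show ?thesis using assms by (auto simp: mem_Times_iff intro!: Min_le Max_ge)
  next
    case False
    then have h: "hole_point S x" using that by (simp add: shape_area_def)
    obtain k where k: "ray x (gdir 0) k \<in> S" using hole_point_ray_meets[OF h] .
    obtain k' where k': "ray x (gdir 3) k' \<in> S" using hole_point_ray_meets[OF h] .
    have right: "(fst x + int k, snd x) \<in> S" and left: "(fst x - int k', snd x) \<in> S"
      using k k' by (simp_all add: ray_def gdir_eq)
    then have "fst x + int k \<le> Max ?F" "Min ?F \<le> fst x - int k'"
      using assms by (force intro!: Max_ge Min_le)+
    moreover have "snd x \<in> snd ` S" using right by (metis image_eqI snd_conv)
    ultimately show ?thesis by (simp add: mem_Times_iff)
  qed
  then have "shape_area S \<subseteq> {Min ?F..Max ?F} \<times> snd ` S" by blast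
  then show ?thesis by (rule finite_subset) (simp add: assms)
qed

lemma drawing_area_in_hole_component:
  assumes "z \<in> drawing (shape_area S)" "z \<notin> drawing S"
  obtains c where "hole_point S c" "z \<in> complement_component S (emb c)"
proof -
  from assms(1) consider c where "c \<in> shape_area S" "z = emb c"
    | c d s where "c \<in> shape_area S" "d \<in> shape_area S" "adj c d" "0 \<le> s" "s \<le> 1"
        "z = (1 - s) *\<^sub>R emb c + s *\<^sub>R emb d"
    unfolding in_drawing_iff by blast
  then show ?thesis
  proof cases
    case 1
    then show ?thesis using that assms(2) emb_in_drawing_iff by (auto simp: shape_area_def)
  next
    case (2 c d s)
    have seg: "z \<in> closed_segment (emb c) (emb d)"
      using 2 unfolding in_segment(1) by blast
    then have seg': "z \<in> closed_segment (emb d) (emb c)"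
      by (simp add: closed_segment_commute)
    have "c \<notin> S \<or> d \<notin> S" using 2 assms(2) unfolding in_drawing_iff by blast
    then show ?thesis
    proof
      assume "c \<notin> S"
      then show ?thesis
        using that[of c] edge_point_in_component[OF 2(3) _ seg assms(2)] 2(1)
        unfolding shape_area_def by blast
    next
      assume "d \<notin> S"
      then show ?thesis
        using that[of d] edge_point_in_component[OF adj_sym[OF 2(3)] _ seg' assms(2)] 2(2)
        unfolding shape_area_def by blast
    qed
  qed
qed

lemma no_hole_in_area: "\<not> hole_point (shape_area S) q"
proof
  assume hq: "hole_point (shape_area S) q"
  then have q: "q \<notin> S" "\<not> hole_point S q" by (auto simp: hole_point_def shape_area_def)
  let ?U = "complement_component S (emb q)"
  have unbounded: "\<not> bounded ?U"
    using q emb_in_drawing_iff unfolding hole_point_def by blast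
  have "?U \<subseteq> - drawing (shape_area S)"
  proof
    fix z assume z: "z \<in> ?U"
    show "z \<in> - drawing (shape_area S)"
    proof
      assume "z \<in> drawing (shape_area S)"
      moreover have "z \<notin> drawing S" using z connected_component_subset by blast
      ultimately obtain c where c: "hole_point S c" "z \<in> complement_component S (emb c)"
        using drawing_area_in_hole_component by blast
      then have "complement_component S (emb c) = ?U"
        using z connected_component_eq by metis
      then show False using c(1) unbounded by (simp add: hole_point_def)
    qed
  qed
  then have "?U \<subseteq> complement_component (shape_area S) (emb q)"
    using q(1) emb_in_drawing_iff by (intro connected_component_maximal) auto
  then show False using hq unbounded bounded_subset unfolding hole_point_def by blast
qed

lemma boundary_point_area:
  assumes "boundary_point (shape_area S) w"
  shows "w \<in> S"
proof (rule ccontr)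
  assume "w \<notin> S"
  then have "hole_point S w" using assms by (simp add: boundary_point_def shape_area_def)
  moreover obtain x where "adj w x" "x \<notin> shape_area S"
    using assms by (auto simp: boundary_point_def)
  ultimately show False using hole_point_adj[of S w x] by (auto simp: shape_area_def)
qed

lemma not_outer_face_point_iff: "\<not> outer_face_point S q \<longleftrightarrow> q \<in> shape_area S"
  using emb_in_drawing_iff[of q S]
  by (auto simp: outer_face_point_def shape_area_def hole_point_def outer_region_def)

section \<open>Eroding a point\<close>

lemma shape_connected_Diff_redundant:
  assumes conn: "shape_connected S" and v: "redundant S v"
  shows "shape_connected (S - {v})"
proof -
  let ?N = "{u \<in> S. adj v u}" and ?R = "(grid_edges (S - {v}))\<^sup>*"
  have "?N \<subseteq> S - {v}" using adj_irrefl by auto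
  then have N: "(x, y) \<in> ?R" if "x \<in> ?N" "y \<in> ?N" for x y
    using v that grid_edges_rtrancl_mono unfolding redundant_def shape_connected_iff_grid_edges by blast
  text \<open>A path in \<open>S\<close> avoiding \<open>v\<close> at its start can be rerouted: every visit of \<open>v\<close>
    enters and leaves through \<open>?N\<close>, which is connected without \<open>v\<close>.\<close>
  have reroute: "(y \<noteq> v \<longrightarrow> (x, y) \<in> ?R) \<and> (y = v \<longrightarrow> (\<exists>n\<in>?N. (x, n) \<in> ?R))"
    if "(x, y) \<in> (grid_edges S)\<^sup>*" "x \<noteq> v" for x y
    using that
  proof (induction rule: rtrancl_induct)
    case base
    then show ?case by simp
  next
    case (step y z)
    then have yz: "y \<in> S" "z \<in> S" "adj y z" by (auto simp: grid_edges_def)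
    show ?case
    proof (cases "y = v")
      case True
      then have z: "z \<in> ?N" "z \<noteq> v" using yz adj_irrefl[of v] by auto
      obtain n where "n \<in> ?N" "(x, n) \<in> ?R" using step True by auto
      then show ?thesis using N[of n z] z by (blast intro: rtrancl_trans)
    next
      case False
      then have xy: "(x, y) \<in> ?R" using step by auto
      show ?thesis
      proof (cases "z = v")
        case True
        then have "y \<in> ?N" using yz adj_sym by auto
        then show ?thesis using xy True by blast
      next
        case z: False
        then have "(y, z) \<in> grid_edges (S - {v})" using yz False by (simp add: grid_edges_def)
        then show ?thesis using xy z by (blast intro: rtrancl_into_rtrancl)
      qed
    qed
  qed
  show ?thesis
    using conn reroute unfolding shape_connected_iff_grid_edges by blast
qed

lemma no_hole_Diff_outer_boundary:
  assumes S: "finite S" and no_holes: "\<forall>q. \<not> hole_point S q" and v: "on_outer_boundary S v"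
  shows "\<not> hole_point (S - {v}) q"
proof
  assume hq: "hole_point (S - {v}) q"
  then have bounded: "bounded (complement_component (S - {v}) (emb q))"
    by (simp add: hole_point_def)
  have grow: "complement_component S z \<subseteq> complement_component (S - {v}) z" for z
    using drawing_mono[of "S - {v}" S] by (intro connected_component_mono) auto
  show False
  proof (cases "q = v")
    case False
    then have "q \<notin> S" using hq by (simp add: hole_point_def)
    then have "\<not> bounded (complement_component S (emb q))"
      using no_holes emb_in_drawing_iff unfolding hole_point_def by blast
    then show False using bounded grow bounded_subset by blast
  next
    case True
    text \<open>A small disc around \<open>emb v\<close> misses the drawing of \<open>S - {v}\<close> and meets the outer region
      of \<open>S\<close>, so the component of \<open>emb v\<close> contains an unbounded component of the old complement.\<close>
    have "open (- drawing (S - {v}))" "emb v \<in> - drawing (S - {v})"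
      using closed_drawing S emb_in_drawing_iff by auto
    then obtain e where e: "e > 0" "ball (emb v) e \<subseteq> - drawing (S - {v})"
      by (meson open_contains_ball)
    have "emb v \<in> closure (outer_region S)"
      using v by (simp add: on_outer_boundary_def frontier_def)
    then obtain z where z: "z \<in> outer_region S" "dist z (emb v) < e"
      using e(1) closure_approachable by blast
    have "ball (emb v) e \<subseteq> complement_component (S - {v}) (emb v)"
      using e by (intro connected_component_maximal) auto
    then have "z \<in> complement_component (S - {v}) (emb v)"
      using z(2) by (auto simp: dist_commute)
    then have "complement_component (S - {v}) z = complement_component (S - {v}) (emb q)"
      using True by (metis connected_component_eq)
    moreover have "\<not> bounded (complement_component S z)"
      using z(1) by (simp add: outer_region_def)
    ultimately show False using bounded grow bounded_subset by metis
  qed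
qed

lemma simply_connected_shape_Diff_SCE:
  assumes "finite S" "simply_connected_shape S" "SCE S v"
  shows "simply_connected_shape (S - {v})"
  using assms shape_connected_Diff_redundant no_hole_Diff_outer_boundary
  unfolding simply_connected_shape_def SCE_def erodable_def by blast

lemma boundary_point_Diff:
  "boundary_point (S - {v}) w \<Longrightarrow> boundary_point S w \<or> adj w v"
  unfolding boundary_point_def by blast

text \<open>An SCE point has a local boundary of at least three consecutive directions, while an interior
  neighbour in direction \<open>j\<close> forces the directions \<open>j - 1, j, j + 1\<close> into \<open>S\<close>; two such
  neighbours would leave at most two directions for the local boundary.\<close>
lemma SCE_interior_neighbour_unique:
  assumes sce: "SCE S v"
    and u1: "adj v u1" "u1 \<in> S" "\<not> boundary_point S u1"
    and u2: "adj v u2" "u2 \<in> S" "\<not> boundary_point S u2"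
  shows "u1 = u2"
proof (rule ccontr)
  assume ne: "u1 \<noteq> u2"
  obtain B where B: "local_boundary S v B" "boundary_count B > 0"
    using sce unfolding SCE_def by blast
  then obtain s l where B_eq: "B = cyc_interval s l" and B_out: "\<forall>i\<in>B. pt_add v (gdir i) \<notin> S"
    unfolding local_boundary_def by blast
  have B_sub: "B \<subseteq> {0, 1, 2, 3, 4, 5}"
    unfolding B_eq cyc_interval_def by auto
  have around: "{j, (j + 1) mod 6, (j + 5) mod 6} \<inter> B = {}"
    if "u = pt_add v (gdir j)" "u \<in> S" "\<not> boundary_point S u" for u j
  proof -
    have "pt_add u (gdir d) \<in> S" for d
      using that(2,3) adj_pt_add_gdir unfolding boundary_point_def by blast
    then have "pt_add v (gdir j) \<in> S" "pt_add v (gdir (j + 1)) \<in> S" "pt_add v (gdir (j + 5)) \<in> S"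
      using that(1,2) gdir_step_next[of v j] gdir_step_prev[of v j] by metis+
    then show ?thesis using B_out B_sub gdir_mod6 by (auto simp del: mod_add_left_eq)
  qed
  obtain j1 j2 where j: "j1 < 6" "j2 < 6" "u1 = pt_add v (gdir j1)" "u2 = pt_add v (gdir j2)"
    using u1(1) u2(1) by (meson adjE)
  let ?rest = "{0, 1, 2, 3, 4, 5} - {j1, (j1 + 1) mod 6, (j1 + 5) mod 6, j2, (j2 + 1) mod 6, (j2 + 5) mod 6}"
  have "j1 \<noteq> j2" using ne j by auto
  moreover have "j1 \<in> {0, 1, 2, 3, 4, 5}" "j2 \<in> {0, 1, 2, 3, 4, 5}" using j(1,2) by auto
  ultimately have "card ?rest \<le> 2"
    by (elim insertE emptyE) (simp_all add: insert_Diff_if)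
  moreover have "B \<subseteq> ?rest"
    using around[OF j(3) u1(2,3)] around[OF j(4) u2(2,3)] B_sub by (auto simp del: mod_add_left_eq)
  then have "card B \<le> card ?rest" by (intro card_mono) auto
  ultimately show False using B(2) by (simp add: boundary_count_def)
qed

section \<open>The invariant of Algorithm DLE\<close>

definition elig_after_removal :: "('p \<Rightarrow> nat) \<Rightarrow> 'p set \<Rightarrow> 'p config \<Rightarrow> 'p \<Rightarrow> 'p \<Rightarrow> nat \<Rightarrow> bool" where
  "elig_after_removal off P C p = (\<lambda>q i.
     if q \<in> nbr_particles P C p \<and> adj (phead C q) (phead C p) \<and> port_pt off C q i = phead C p
     then False else pelig C q i)"

lemma dle_act_cases:
  assumes "dle_act off P p C C'"
  obtains (unchanged) "Se C' = Se C" "phead C' = phead C" "ptail C' = ptail C" "pelig C' = pelig C"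
  | (contract) "C' = C\<lparr>ptail := (ptail C)(p := phead C p)\<rparr>"
  | (expand) u where "ptail C p = phead C p" "SCE (Se C) (phead C p)" "\<exists>i<6. pelig C p i"
      "adj (phead C p) u" "u \<in> Se C - {phead C p}" "u \<notin> occupied P C"
      "C' = C\<lparr>Se := Se C - {phead C p},
               pelig := (elig_after_removal off P C p)(p := (\<lambda>i. pt_add u (gdir (i + off p)) \<noteq> phead C p)),
               phead := (phead C)(p := u)\<rparr>"
  | (settle) "ptail C p = phead C p" "SCE (Se C) (phead C p)" "\<exists>i<6. pelig C p i"
      "C' = C\<lparr>Se := Se C - {phead C p}, pelig := elig_after_removal off P C p,
               pstatus := (pstatus C)(p := Follower)\<rparr>"
      "\<And>u. adj (phead C p) u \<Longrightarrow> u \<in> Se C - {phead C p} \<Longrightarrow> u \<in> occupied P C"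
  using assms that unfolding dle_act_def Let_def elig_after_removal_def[symmetric]
  by (auto split: if_splits)

definition exclusive :: "'p set \<Rightarrow> 'p config \<Rightarrow> bool" where
  "exclusive P C \<longleftrightarrow>
     (\<forall>p\<in>P. \<forall>q\<in>P. p \<noteq> q \<longrightarrow> {phead C p, ptail C p} \<inter> {phead C q, ptail C q} = {})"

lemma exclusive_move_head:
  assumes excl: "exclusive P C" and p: "p \<in> P" "ptail C p = phead C p"
    and w: "w = phead C p \<or> w \<notin> occupied P C"
    and head': "phead C' = (phead C)(p := w)" and tail': "ptail C' = ptail C"
  shows "exclusive P C'" and "occupied P C \<subseteq> occupied P C'"
proof -
  have position: "{phead C' q, ptail C' q} = (if q = p then {w, phead C p} else {phead C q, ptail C q})"
    for q
    using p(2) head' tail' by auto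
  have "w \<notin> {phead C q, ptail C q}" if "q \<in> P" "q \<noteq> p" for q
    using w excl p that unfolding exclusive_def occupied_def by blast
  then show "exclusive P C'"
    using excl p unfolding exclusive_def position by auto
  show "occupied P C \<subseteq> occupied P C'"
  proof
    fix x assume "x \<in> occupied P C"
    then obtain q where q: "q \<in> P" "x \<in> {phead C q, ptail C q}" by (auto simp: occupied_def)
    then have "x \<in> {phead C' q, ptail C' q}" using p(2) unfolding position by auto
    then show "x \<in> occupied P C'" using q(1) by (auto simp: occupied_def)
  qed
qed

text \<open>The claims of the theorem, strengthened by finiteness of \<open>Se\<close> and by the exclusion
  property of the model to make them inductive.\<close>
definition dle_inv :: "('p \<Rightarrow> nat) \<Rightarrow> 'p set \<Rightarrow> 'p config \<Rightarrow> bool" where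
  "dle_inv off P C \<longleftrightarrow> finite (Se C) \<and>
     (\<forall>p\<in>P. phead C p \<noteq> ptail C p \<longrightarrow> phead C p \<in> Se C \<and> ptail C p \<notin> Se C) \<and>
     simply_connected_shape (Se C) \<and> Se C \<noteq> {} \<and>
     (\<forall>v. boundary_point (Se C) v \<longrightarrow> v \<in> occupied P C) \<and>
     (\<forall>p\<in>P. \<forall>i<6. pelig C p i \<longleftrightarrow> port_pt off C p i \<in> Se C) \<and>
     exclusive P C"

lemma dle_invD:
  assumes "dle_inv off P C"
  shows "finite (Se C)"
    and "\<And>p. p \<in> P \<Longrightarrow> phead C p \<noteq> ptail C p \<Longrightarrow> phead C p \<in> Se C \<and> ptail C p \<notin> Se C"
    and "simply_connected_shape (Se C)" and "Se C \<noteq> {}"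
    and "\<And>v. boundary_point (Se C) v \<Longrightarrow> v \<in> occupied P C"
    and "\<And>p i. p \<in> P \<Longrightarrow> i < 6 \<Longrightarrow> pelig C p i \<longleftrightarrow> port_pt off C p i \<in> Se C"
    and "exclusive P C"
  using assms unfolding dle_inv_def by auto

lemma dle_inv_cong:
  assumes "Se C' = Se C" "phead C' = phead C" "ptail C' = ptail C" "pelig C' = pelig C"
  shows "dle_inv off P C' = dle_inv off P C"
  unfolding dle_inv_def exclusive_def occupied_def port_pt_def assms ..

lemma dle_inv_init:
  assumes "permitted_init off P C"
  shows "dle_inv off P C"
proof -
  let ?S = "phead C ` P"
  have P: "finite P" "P \<noteq> {}" and contracted: "\<forall>p\<in>P. ptail C p = phead C p"
    and inj: "inj_on (phead C) P" and conn: "shape_connected ?S"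
    and elig: "\<forall>p\<in>P. \<forall>i<6. pelig C p i \<longleftrightarrow> \<not> outer_face_point ?S (port_pt off C p i)"
    and Se: "Se C = shape_area ?S"
    using assms unfolding permitted_init_def by auto
  have "simply_connected_shape (Se C)"
    unfolding Se simply_connected_shape_def using shape_connected_area[OF conn] no_hole_in_area by blast
  moreover have "\<forall>v. boundary_point (Se C) v \<longrightarrow> v \<in> occupied P C"
    unfolding Se occupied_def using boundary_point_area by blast
  moreover have "\<forall>p\<in>P. \<forall>i<6. pelig C p i \<longleftrightarrow> port_pt off C p i \<in> Se C"
    unfolding Se using elig not_outer_face_point_iff by blast
  moreover have "finite (Se C)" "Se C \<noteq> {}"
    using finite_shape_area P unfolding Se by (auto simp: shape_area_def)
  ultimately show ?thesis
    using contracted inj unfolding dle_inv_def exclusive_def inj_on_def by auto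
qed

lemma dle_inv_contract:
  assumes I: "dle_inv off P C" and p: "p \<in> P"
  shows "dle_inv off P (C\<lparr>ptail := (ptail C)(p := phead C p)\<rparr>)" (is "dle_inv off P ?C'")
proof -
  have "w \<in> occupied P ?C'" if "boundary_point (Se C) w" for w
  proof -
    have "w \<in> occupied P C" using dle_invD(5)[OF I that] .
    moreover have "w \<noteq> ptail C p \<or> ptail C p = phead C p"
      using dle_invD(2)[OF I p] that unfolding boundary_point_def by metis
    ultimately show ?thesis using p by (auto simp: occupied_def)
  qed
  then show ?thesis
    using I unfolding dle_inv_def exclusive_def port_pt_def by auto
qed

lemma elig_after_removal_iff:
  assumes I: "dle_inv off P C" and q: "q \<in> P" "q \<noteq> p" and i: "i < 6"
  shows "elig_after_removal off P C p q i \<longleftrightarrow> port_pt off C q i \<in> Se C - {phead C p}"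
proof (cases "port_pt off C q i = phead C p")
  case True
  then have "adj (phead C q) (phead C p)"
    unfolding port_pt_def by (metis adj_pt_add_gdir)
  then have "q \<in> nbr_particles P C p"
    unfolding nbr_particles_def using q adj_sym by blast
  then show ?thesis using True \<open>adj (phead C q) (phead C p)\<close> by (simp add: elig_after_removal_def)
next
  case False
  then show ?thesis using dle_invD(6)[OF I q(1) i] by (simp add: elig_after_removal_def)
qed

text \<open>Covers both erosion moves: afterwards \<open>p\<close> either stays at its point (\<open>w = phead C p\<close>) or
  has expanded into the free point \<open>w\<close>.\<close>
lemma dle_inv_removal:
  assumes I: "dle_inv off P C" and p: "p \<in> P" "ptail C p = phead C p" "SCE (Se C) (phead C p)"
      "\<exists>i<6. pelig C p i"
    and w: "w = phead C p \<or> (w \<in> Se C - {phead C p} \<and> w \<notin> occupied P C)"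
    and Se': "Se C' = Se C - {phead C p}"
    and head': "phead C' = (phead C)(p := w)" and tail': "ptail C' = ptail C"
    and elig': "\<And>q. q \<noteq> p \<Longrightarrow> pelig C' q = elig_after_removal off P C p q"
    and elig_p: "\<And>i. i < 6 \<Longrightarrow> pelig C' p i \<longleftrightarrow> port_pt off C' p i \<in> Se C'"
    and nbrs: "\<And>u. adj (phead C p) u \<Longrightarrow> u \<in> Se C' \<Longrightarrow> u \<notin> occupied P C \<Longrightarrow> u \<in> occupied P C'"
  shows "dle_inv off P C'"
proof -
  let ?v = "phead C p"
  have others: "phead C q \<noteq> ?v" "ptail C q \<noteq> ?v" if "q \<in> P" "q \<noteq> p" for q
    using dle_invD(7)[OF I] p that unfolding exclusive_def by blast+
  have "w = ?v \<or> w \<notin> occupied P C" using w by blast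
  note move = exclusive_move_head[OF dle_invD(7)[OF I] p(1,2) this head' tail']
  have boundary: "\<forall>u. boundary_point (Se C') u \<longrightarrow> u \<in> occupied P C'"
    using boundary_point_Diff[of "Se C" ?v] dle_invD(5)[OF I] move(2) nbrs adj_sym
    unfolding Se' boundary_point_def by blast
  have expanded: "\<forall>q\<in>P. phead C' q \<noteq> ptail C' q \<longrightarrow> phead C' q \<in> Se C' \<and> ptail C' q \<notin> Se C'"
    using dle_invD(2)[OF I] others w p(2) unfolding Se' head' tail' by auto
  have elig: "\<forall>q\<in>P. \<forall>i<6. pelig C' q i \<longleftrightarrow> port_pt off C' q i \<in> Se C'"
    using elig_p elig' elig_after_removal_iff[OF I] unfolding Se' port_pt_def head' by auto
  obtain i where "i < 6" "pelig C p i" using p(4) by blast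
  then have "port_pt off C p i \<in> Se C - {?v}"
    using dle_invD(6)[OF I p(1)] pt_add_gdir_neq unfolding port_pt_def by blast
  then have "Se C' \<noteq> {}" unfolding Se' by blast
  moreover have "finite (Se C')" "simply_connected_shape (Se C')"
    using dle_invD(1,3)[OF I] simply_connected_shape_Diff_SCE p(3) unfolding Se' by auto
  ultimately show ?thesis
    using expanded boundary elig move(1) unfolding dle_inv_def by blast
qed

lemma dle_inv_expand:
  assumes I: "dle_inv off P C" and p: "p \<in> P" "ptail C p = phead C p" "SCE (Se C) (phead C p)"
      "\<exists>i<6. pelig C p i"
    and u: "adj (phead C p) u" "u \<in> Se C - {phead C p}" "u \<notin> occupied P C"
  shows "dle_inv off P (C\<lparr>Se := Se C - {phead C p},
      pelig := (elig_after_removal off P C p)(p := (\<lambda>i. pt_add u (gdir (i + off p)) \<noteq> phead C p)),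
      phead := (phead C)(p := u)\<rparr>)" (is "dle_inv off P ?C'")
proof (rule dle_inv_removal[OF I p, of u])
  have interior: "\<not> boundary_point (Se C) x" if "x \<in> Se C" "x \<notin> occupied P C" for x
    using dle_invD(5)[OF I] that by blast
  then have "pt_add u (gdir j) \<in> Se C" for j
    using u adj_pt_add_gdir unfolding boundary_point_def by blast
  then show "pelig ?C' p i \<longleftrightarrow> port_pt off ?C' p i \<in> Se ?C'" for i
    by (simp add: port_pt_def)
  show "x \<in> occupied P ?C'" if "adj (phead C p) x" "x \<in> Se ?C'" "x \<notin> occupied P C" for x
  proof -
    have "x = u"
      using SCE_interior_neighbour_unique[OF p(3) that(1) _ _ u(1)] interior u that by auto
    then show ?thesis using p(1) by (simp add: occupied_def)
  qed
qed (use u in auto)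

lemma dle_inv_settle:
  assumes I: "dle_inv off P C" and p: "p \<in> P" "ptail C p = phead C p" "SCE (Se C) (phead C p)"
      "\<exists>i<6. pelig C p i"
    and no_free: "\<And>u. adj (phead C p) u \<Longrightarrow> u \<in> Se C - {phead C p} \<Longrightarrow> u \<in> occupied P C"
  shows "dle_inv off P (C\<lparr>Se := Se C - {phead C p}, pelig := elig_after_removal off P C p,
      pstatus := (pstatus C)(p := Follower)\<rparr>)" (is "dle_inv off P ?C'")
proof (rule dle_inv_removal[OF I p, of "phead C p"])
  have "p \<notin> nbr_particles P C p" by (simp add: nbr_particles_def)
  then show "pelig ?C' p i \<longleftrightarrow> port_pt off ?C' p i \<in> Se ?C'" if "i < 6" for i
    using dle_invD(6)[OF I p(1) that] pt_add_gdir_neq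
    by (simp add: elig_after_removal_def port_pt_def)
qed (use no_free in auto)

lemma dle_inv_step:
  assumes I: "dle_inv off P C" and p: "p \<in> P" and act: "dle_act off P p C C'"
  shows "dle_inv off P C'"
  using act
proof (cases rule: dle_act_cases)
  case unchanged
  then show ?thesis using I dle_inv_cong by metis
next
  case contract
  then show ?thesis using dle_inv_contract[OF I p] by simp
next
  case (expand u)
  then show ?thesis using dle_inv_expand[OF I p] by simp
next
  case settle
  then show ?thesis using dle_inv_settle[OF I p] by simp
qed

theorem lemma4p2:
  fixes off :: "'p \<Rightarrow> nat" and P :: "'p set"
    and E :: "nat \<Rightarrow> 'p config" and sched :: "nat \<Rightarrow> 'p" and n :: nat
  assumes "fair_dle_execution off P E sched"
  shows "(\<forall>p\<in>P. phead (E n) p \<noteq> ptail (E n) p \<longrightarrow>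
              phead (E n) p \<in> Se (E n) \<and> ptail (E n) p \<notin> Se (E n))
       \<and> simply_connected_shape (Se (E n)) \<and> Se (E n) \<noteq> {}
       \<and> (\<forall>v. boundary_point (Se (E n)) v \<longrightarrow> v \<in> occupied P (E n))
       \<and> (\<forall>p\<in>P. \<forall>i<6. pelig (E n) p i \<longleftrightarrow> port_pt off (E n) p i \<in> Se (E n))"
proof -
  have init: "permitted_init off P (E 0)"
    and step: "\<And>k. sched k \<in> P \<and> dle_act off P (sched k) (E k) (E (Suc k))"
    using assms unfolding fair_dle_execution_def by auto
  have "dle_inv off P (E n)"
  proof (induction n)
    case 0
    show ?case using dle_inv_init[OF init] .
  next
    case (Suc n)
    have "sched n \<in> P" "dle_act off P (sched n) (E n) (E (Suc n))" using step[of n] by simp_all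
    then show ?case by (rule dle_inv_step[OF Suc.IH])
  qed
  then show ?thesis unfolding dle_inv_def by (elim conjE) (intro conjI; assumption)
qed

end
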